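(* Let $G$ be a graph with Hermitian adjacency matrix $A$ that has universal perfect state transfer, and let $u$ be a vertex of $G$. Then for all vertices $v \neq u$ we have $t_{u,v} < t_{u,u}$.
   Context: A (weighted) graph $G$ on $n$ vertices is given by its adjacency matrix $A$, an $n\times n$ complex matrix, here assumed Hermitian. The continuous-time quantum walk is $U(t)=\exp(-\mathtt{i} A t)$. For vertices $v,w$, let $T_{v,w}=\{t\in\mathbb{R}^{+} : |\langle w| e^{-\mathtt{i} A t}|v\rangle|=1\}$ be the set of (positive) times at which perfect state transfer occurs from $v$ to $w$. $G$ has universal perfect state transfer if $T_{v,w}\neq\emptyset$ for every pair of vertices $v,w$. In that case each $T_{v,w}$ is a discrete additive subgroup of $\mathbb{R}$ (intersected with the positive reals), so it has a smallest element, denoted $t_{v,w}=\min T_{v,w}$. *)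

theory Defs
  imports "HOL-Analysis.Analysis"
begin

primrec mat_pow :: "complex^'n::finite^'n \<Rightarrow> nat \<Rightarrow> complex^'n^'n" where
  "mat_pow M 0 = mat 1"
| "mat_pow M (Suc k) = M ** mat_pow M k"

definition mat_exp :: "complex^'n::finite^'n \<Rightarrow> complex^'n^'n" where
  "mat_exp M = (\<Sum>k. (1 / fact k) *\<^sub>R mat_pow M k)"

definition hermitian_mat :: "complex^'n::finite^'n \<Rightarrow> bool" where
  "hermitian_mat A \<longleftrightarrow> (\<forall>i j. A $ i $ j = cnj (A $ j $ i))"

definition walk :: "complex^'n::finite^'n \<Rightarrow> real \<Rightarrow> complex^'n^'n" where
  "walk A t = mat_exp (\<chi> i j. - \<i> * complex_of_real t * A $ i $ j)"

text \<open>Set of positive PST times from v to w; the entry <w|U(t)|v> is row w, column v.\<close>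
definition pst_times :: "complex^'n::finite^'n \<Rightarrow> 'n \<Rightarrow> 'n \<Rightarrow> real set" where
  "pst_times A v w = {t. t > 0 \<and> cmod (walk A t $ w $ v) = 1}"

definition universal_pst :: "complex^'n::finite^'n \<Rightarrow> bool" where
  "universal_pst A \<longleftrightarrow> (\<forall>v w. pst_times A v w \<noteq> {})"

definition min_pst_time :: "complex^'n::finite^'n \<Rightarrow> 'n \<Rightarrow> 'n \<Rightarrow> real" where
  "min_pst_time A v w = Inf (pst_times A v w)"

end

theory Submission
  imports Defs
begin

text \<open>The walk is unitary, so perfect state transfer from \<open>u\<close> to \<open>w\<close> at time \<open>t\<close>
  means that \<open>U(t)\<close> maps \<open>e\<^sub>u\<close> to a phase times \<open>e\<^sub>w\<close>. The time \<open>m = t\<^sub>u\<^sub>,\<^sub>v\<close> is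
  attained, since the transfer condition is closed. If \<open>u\<close> returned to itself at some
  \<open>s < m\<close>, then \<open>U(m - s) = U(m) U(s)\<^sup>-\<^sup>1\<close> would transfer \<open>u\<close> to \<open>v\<close> before \<open>m\<close>;
  and \<open>s = m\<close> is impossible since \<open>U(m) e\<^sub>u\<close> lives on \<open>v \<noteq> u\<close>.\<close>

text \<open>Matrices under \<open>**\<close> carry no Banach algebra instance, so the exponential series is
  evaluated in this copy of the bounded operators on \<open>complex^'n\<close>.\<close>
typedef (overloaded) 'n lin_op = "UNIV :: ((complex^'n::finite) \<Rightarrow>\<^sub>L (complex^'n)) set"
  morphisms rep_lin_op Abs_lin_op by auto

setup_lifting type_definition_lin_op

instantiation lin_op :: (finite) real_normed_vector
begin
lift_definition norm_lin_op :: "'a lin_op \<Rightarrow> real" is norm .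
lift_definition minus_lin_op :: "'a lin_op \<Rightarrow> 'a lin_op \<Rightarrow> 'a lin_op" is "(-)" .
lift_definition plus_lin_op :: "'a lin_op \<Rightarrow> 'a lin_op \<Rightarrow> 'a lin_op" is "(+)" .
lift_definition uminus_lin_op :: "'a lin_op \<Rightarrow> 'a lin_op" is uminus .
lift_definition zero_lin_op :: "'a lin_op" is 0 .
lift_definition scaleR_lin_op :: "real \<Rightarrow> 'a lin_op \<Rightarrow> 'a lin_op" is scaleR .
definition dist_lin_op :: "'a lin_op \<Rightarrow> 'a lin_op \<Rightarrow> real" where
  "dist_lin_op a b = norm (a - b)"
definition uniformity_lin_op :: "('a lin_op \<times> 'a lin_op) filter" where
  "uniformity_lin_op = (INF e\<in>{0 <..}. principal {(x, y). dist x y < e})"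
definition open_lin_op :: "'a lin_op set \<Rightarrow> bool" where
  "open_lin_op S = (\<forall>x\<in>S. \<forall>\<^sub>F (x', y) in uniformity. x' = x \<longrightarrow> y \<in> S)"
definition sgn_lin_op :: "'a lin_op \<Rightarrow> 'a lin_op" where
  "sgn_lin_op x = scaleR (inverse (norm x)) x"
instance
  apply standard
  unfolding dist_lin_op_def open_lin_op_def sgn_lin_op_def uniformity_lin_op_def
  apply (rule refl | (transfer, force simp: norm_triangle_ineq algebra_simps))+
  done
end

instantiation lin_op :: (finite) real_normed_algebra_1
begin
lift_definition times_lin_op :: "'a lin_op \<Rightarrow> 'a lin_op \<Rightarrow> 'a lin_op" is blinfun_compose .
lift_definition one_lin_op :: "'a lin_op" is id_blinfun .
instance
proof
  fix a b c :: "'a lin_op" and r :: real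
  show "a * b * c = a * (b * c)" by transfer (auto intro: blinfun_eqI)
  show "1 * a = a" by transfer (auto intro: blinfun_eqI)
  show "a * 1 = a" by transfer (auto intro: blinfun_eqI)
  show "(a + b) * c = a * c + b * c"
    by transfer (auto intro: blinfun_eqI simp: blinfun.bilinear_simps)
  show "a * (b + c) = a * b + a * c"
    by transfer (auto intro: blinfun_eqI simp: blinfun.bilinear_simps)
  show "r *\<^sub>R a * b = r *\<^sub>R (a * b)"
    by transfer (auto intro: blinfun_eqI simp: blinfun.bilinear_simps)
  show "a * r *\<^sub>R b = r *\<^sub>R (a * b)"
    by transfer (auto intro: blinfun_eqI simp: blinfun.bilinear_simps)
  show "norm (a * b) \<le> norm a * norm b" by transfer (rule norm_blinfun_compose)
  show "norm (1::'a lin_op) = 1" by transfer simp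
  show "(0::'a lin_op) \<noteq> 1"
  proof transfer
    show "(0 :: (complex^'a) \<Rightarrow>\<^sub>L (complex^'a)) \<noteq> id_blinfun"
    proof
      assume "(0 :: (complex^'a) \<Rightarrow>\<^sub>L (complex^'a)) = id_blinfun"
      then have "blinfun_apply (0 :: (complex^'a) \<Rightarrow>\<^sub>L (complex^'a)) (axis undefined 1)
          = axis undefined 1"
        by (metis blinfun_apply_id_blinfun)
      then show False by (simp add: axis_eq_0_iff)
    qed
  qed
qed
end

lemma dist_rep_lin_op: "dist (rep_lin_op a) (rep_lin_op b) = dist a b"
  by (simp add: dist_lin_op_def dist_norm norm_lin_op.rep_eq minus_lin_op.rep_eq)

instance lin_op :: (finite) banach
proof
  fix X :: "nat \<Rightarrow> 'a lin_op"
  assume "Cauchy X"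
  then have "Cauchy (\<lambda>n. rep_lin_op (X n))" by (simp add: Cauchy_def dist_rep_lin_op)
  then obtain L where L: "(\<lambda>n. rep_lin_op (X n)) \<longlonglongrightarrow> L" using convergent_eq_Cauchy by blast
  have "X \<longlonglongrightarrow> Abs_lin_op L"
  proof (rule metric_LIMSEQ_I)
    fix r :: real
    assume "0 < r"
    from metric_LIMSEQ_D[OF L this] obtain N where "\<forall>n\<ge>N. dist (rep_lin_op (X n)) L < r" by blast
    then show "\<exists>N. \<forall>n\<ge>N. dist (X n) (Abs_lin_op L) < r"
      by (metis dist_rep_lin_op Abs_lin_op_inverse UNIV_I)
  qed
  then show "convergent X" by (auto simp: convergent_def)
qed

lemma lin_op_eqI:
  "(\<And>x. blinfun_apply (rep_lin_op a) x = blinfun_apply (rep_lin_op b) x) \<Longrightarrow> a = b"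
  by (metis blinfun_eqI rep_lin_op_inject)

lemma bounded_linear_rep_lin_op: "bounded_linear rep_lin_op"
  by (rule bounded_linear_intro[where K=1])
    (simp_all add: plus_lin_op.rep_eq scaleR_lin_op.rep_eq norm_lin_op.rep_eq)

lemma bounded_linear_apply_lin_op: "bounded_linear (\<lambda>L. blinfun_apply (rep_lin_op L) x)"
  by (rule bounded_linear_compose[OF blinfun.bounded_linear_left bounded_linear_rep_lin_op])

lemma bounded_linear_vec_lambda:
  fixes f :: "'i::finite \<Rightarrow> 'a::real_normed_vector \<Rightarrow> 'b::real_normed_vector"
  assumes "\<And>i. bounded_linear (f i)"
  shows "bounded_linear (\<lambda>x. \<chi> i. f i x)"
proof -
  have "\<forall>i. \<exists>K. \<forall>x. norm (f i x) \<le> norm x * K"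
    using assms bounded_linear.bounded by blast
  then obtain K where K: "\<And>i x. norm (f i x) \<le> norm x * K i" by metis
  show ?thesis
  proof (rule bounded_linear_intro[where K="\<Sum>i\<in>UNIV. K i"])
    fix x y :: 'a and r :: real
    show "(\<chi> i. f i (x + y)) = (\<chi> i. f i x) + (\<chi> i. f i y)"
      using assms by (simp add: vec_eq_iff linear_add bounded_linear.linear)
    show "(\<chi> i. f i (r *\<^sub>R x)) = r *\<^sub>R (\<chi> i. f i x)"
      using assms by (simp add: vec_eq_iff linear_scale bounded_linear.linear)
    have "norm (\<chi> i. f i x) \<le> (\<Sum>i\<in>UNIV. norm (f i x))"
      unfolding norm_vec_def by (rule order_trans[OF L2_set_le_sum]) simp_all
    also have "\<dots> \<le> (\<Sum>i\<in>UNIV. norm x * K i)"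
      by (rule sum_mono) (rule K)
    finally show "norm (\<chi> i. f i x) \<le> norm x * (\<Sum>i\<in>UNIV. K i)"
      by (simp add: sum_distrib_left)
  qed
qed

lemma bounded_linear_matrix_vector_mult_left:
  "bounded_linear (\<lambda>N::complex^'n::finite^'m::finite. N *v x)"
proof -
  have "linear (\<lambda>N::complex^'n^'m. N *v x)"
    by (rule linearI) (simp_all add: vec_eq_iff matrix_vector_mult_def
        sum.distrib scaleR_sum_right algebra_simps)
  then show ?thesis by (simp add: linear_conv_bounded_linear)
qed

definition lin_op_of_matrix :: "complex^'n::finite^'n \<Rightarrow> 'n lin_op" where
  "lin_op_of_matrix N = Abs_lin_op (Blinfun (\<lambda>x. N *v x))"

definition matrix_of_lin_op :: "'n::finite lin_op \<Rightarrow> complex^'n^'n" where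
  "matrix_of_lin_op L = (\<chi> i j. blinfun_apply (rep_lin_op L) (axis j 1) $ i)"

lemma apply_lin_op_of_matrix: "blinfun_apply (rep_lin_op (lin_op_of_matrix N)) x = N *v x"
  by (simp add: lin_op_of_matrix_def Abs_lin_op_inverse bounded_linear_Blinfun_apply)

lemma lin_op_of_matrix_mult: "lin_op_of_matrix (N ** K) = lin_op_of_matrix N * lin_op_of_matrix K"
  by (rule lin_op_eqI)
    (simp add: apply_lin_op_of_matrix times_lin_op.rep_eq matrix_vector_mul_assoc)

lemma lin_op_of_matrix_pow: "lin_op_of_matrix (mat_pow N k) = lin_op_of_matrix N ^ k"
proof (induction k)
  case 0
  show ?case by (rule lin_op_eqI) (simp add: apply_lin_op_of_matrix one_lin_op.rep_eq)
next
  case (Suc k)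
  then show ?case by (simp add: lin_op_of_matrix_mult)
qed

lemma lin_op_of_matrix_scaleR: "lin_op_of_matrix (r *\<^sub>R N) = r *\<^sub>R lin_op_of_matrix N"
  by (rule lin_op_eqI) (simp add: apply_lin_op_of_matrix scaleR_lin_op.rep_eq vec_eq_iff
      matrix_vector_mult_def scaleR_sum_right blinfun.scaleR_left)

lemma bounded_linear_matrix_of_lin_op: "bounded_linear matrix_of_lin_op"
  unfolding matrix_of_lin_op_def
  by (intro bounded_linear_vec_lambda
      bounded_linear_compose[OF bounded_linear_vec_nth bounded_linear_apply_lin_op])

lemma matrix_of_lin_op_of_matrix: "matrix_of_lin_op (lin_op_of_matrix N) = N"
  by (simp add: matrix_of_lin_op_def apply_lin_op_of_matrix vec_eq_iff matrix_vector_mult_def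
      axis_def if_distrib cong: if_cong)

lemma exp_terms_lin_op_of_matrix:
  "lin_op_of_matrix N ^ n /\<^sub>R fact n = lin_op_of_matrix ((1 / fact n) *\<^sub>R mat_pow N n)"
  by (simp add: lin_op_of_matrix_scaleR lin_op_of_matrix_pow inverse_eq_divide)

lemma bounded_linear_exp_lin_op_of_matrix:
  assumes "bounded_linear f"
  shows "f (exp (lin_op_of_matrix N)) = (\<Sum>n. f (lin_op_of_matrix ((1 / fact n) *\<^sub>R mat_pow N n)))"
  unfolding exp_def exp_terms_lin_op_of_matrix[symmetric]
  by (rule bounded_linear.suminf[OF assms summable_exp_generic])

lemma matrix_of_exp_lin_op_of_matrix: "matrix_of_lin_op (exp (lin_op_of_matrix N)) = mat_exp N"
  by (simp add: bounded_linear_exp_lin_op_of_matrix[OF bounded_linear_matrix_of_lin_op]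
      matrix_of_lin_op_of_matrix mat_exp_def)

text \<open>Elements of \<open>lin_op\<close> are only real-linear, so their action is not determined by
  \<open>matrix_of_lin_op\<close>; the identity is checked term by term of the exponential series.\<close>
lemma apply_exp_lin_op_of_matrix:
  "blinfun_apply (rep_lin_op (exp (lin_op_of_matrix N))) x = mat_exp N *v x"
proof -
  define G where "G L = blinfun_apply (rep_lin_op L) x - matrix_of_lin_op L *v x" for L
  have "bounded_linear G"
    unfolding G_def
    by (intro bounded_linear_sub bounded_linear_apply_lin_op
        bounded_linear_compose[OF bounded_linear_matrix_vector_mult_left
          bounded_linear_matrix_of_lin_op])
  moreover have "G (lin_op_of_matrix M) = 0" for M
    by (simp add: G_def matrix_of_lin_op_of_matrix apply_lin_op_of_matrix)
  ultimately have "G (exp (lin_op_of_matrix N)) = 0"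
    by (simp add: bounded_linear_exp_lin_op_of_matrix)
  then show ?thesis by (simp add: G_def matrix_of_exp_lin_op_of_matrix)
qed

definition walk_generator :: "complex^'n::finite^'n \<Rightarrow> complex^'n^'n" where
  "walk_generator A = (\<chi> i j. - \<i> * A $ i $ j)"

lemma walk_apply_eq_exp:
  "walk A t *v x = blinfun_apply (rep_lin_op (exp (t *\<^sub>R lin_op_of_matrix (walk_generator A)))) x"
proof -
  have "(\<chi> i j. - \<i> * complex_of_real t * A $ i $ j) = t *\<^sub>R walk_generator A"
    by (simp add: walk_generator_def vec_eq_iff) (simp add: scaleR_conv_of_real)
  then show ?thesis
    by (simp add: walk_def apply_exp_lin_op_of_matrix lin_op_of_matrix_scaleR[symmetric])
qed

lemma walk_add: "walk A (s + t) *v x = walk A s *v (walk A t *v x)"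
proof -
  let ?X = "lin_op_of_matrix (walk_generator A)"
  have "exp ((s + t) *\<^sub>R ?X) = exp (s *\<^sub>R ?X) * exp (t *\<^sub>R ?X)"
    by (simp add: scaleR_add_left exp_add_commuting)
  then show ?thesis by (simp add: walk_apply_eq_exp times_lin_op.rep_eq)
qed

lemma walk_zero: "walk A 0 *v x = x"
  by (simp add: walk_apply_eq_exp one_lin_op.rep_eq)

lemma walk_has_vector_derivative:
  "((\<lambda>t. walk A t *v x) has_vector_derivative walk_generator A *v (walk A t *v x)) (at t)"
proof -
  let ?X = "lin_op_of_matrix (walk_generator A)"
  have "((\<lambda>t. exp (t *\<^sub>R ?X)) has_vector_derivative ?X * exp (t *\<^sub>R ?X)) (at t)"
    by (rule exp_scaleR_has_vector_derivative_left)
  from bounded_linear.has_vector_derivative[OF bounded_linear_apply_lin_op this] show ?thesis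
    by (simp add: walk_apply_eq_exp times_lin_op.rep_eq apply_lin_op_of_matrix)
qed

lemma matrix_vector_mult_axis_nth: "(W *v axis u 1) $ w = W $ w $ u"
  by (simp add: matrix_vector_mult_def axis_def if_distrib sum.delta' cong: if_cong)

lemma continuous_on_walk_entry: "continuous_on UNIV (\<lambda>t. walk A t $ w $ u)"
proof -
  have "continuous_on UNIV (\<lambda>t. walk A t *v axis u 1)"
    by (metis continuous_at_imp_continuous_on has_vector_derivative_continuous
        walk_has_vector_derivative)
  then show ?thesis
    by (simp add: matrix_vector_mult_axis_nth[symmetric] continuous_on_component)
qed

lemma hermitian_walk_generator_inner_self:
  assumes "hermitian_mat A"
  shows "(walk_generator A *v y) \<bullet> y = 0"
proof -
  define S where "S = (\<Sum>i\<in>UNIV. \<Sum>j\<in>UNIV. A $ j $ i * cnj (y $ j) * y $ i)"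
  have cnj_A: "\<And>i j. cnj (A $ i $ j) = A $ j $ i"
    using assms by (metis complex_cnj_cnj hermitian_mat_def)
  have "(walk_generator A *v y) \<bullet> y = Re (\<Sum>i\<in>UNIV. cnj ((walk_generator A *v y) $ i) * y $ i)"
    by (simp add: inner_vec_def inner_complex_def Re_sum)
  also have "(\<Sum>i\<in>UNIV. cnj ((walk_generator A *v y) $ i) * y $ i) = \<i> * S"
    by (simp add: S_def walk_generator_def matrix_vector_mult_def sum_distrib_left
        sum_distrib_right cnj_A algebra_simps)
  finally have "(walk_generator A *v y) \<bullet> y = - Im S" by simp
  moreover have "cnj S = S"
    unfolding S_def by (simp add: cnj_A) (subst sum.swap, simp add: algebra_simps)
  then have "Im S = 0" by (metis cnj.simps(2) complex.sel(2) neg_equal_zero)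
  ultimately show ?thesis by simp
qed

lemma norm_walk_apply:
  assumes "hermitian_mat A"
  shows "norm (walk A t *v x) = norm x"
proof -
  define f where "f t = (walk A t *v x) \<bullet> (walk A t *v x)" for t
  have "(f has_real_derivative 0) (at s)" for s
  proof -
    let ?D = "walk_generator A *v (walk A s *v x)"
    have d: "((\<lambda>t. walk A t *v x) has_derivative (\<lambda>h. h *\<^sub>R ?D)) (at s)"
      using walk_has_vector_derivative by (simp add: has_vector_derivative_def)
    have "(f has_derivative
        (\<lambda>h. (walk A s *v x) \<bullet> (h *\<^sub>R ?D) + (h *\<^sub>R ?D) \<bullet> (walk A s *v x))) (at s)"
      unfolding f_def by (rule has_derivative_inner[OF d d])
    moreover have "(\<lambda>h. (walk A s *v x) \<bullet> (h *\<^sub>R ?D) + (h *\<^sub>R ?D) \<bullet> (walk A s *v x)) = (*) 0"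
      using hermitian_walk_generator_inner_self[OF assms] by (auto simp: inner_commute)
    ultimately show ?thesis by (simp add: has_field_derivative_def)
  qed
  then have "f t = f 0" by (meson DERIV_isconst_all)
  then have "norm (walk A t *v x) ^ 2 = norm x ^ 2"
    by (simp add: f_def walk_zero power2_norm_eq_inner)
  then show ?thesis by simp
qed

lemma unit_vector_nth_eq_0:
  fixes y :: "complex^'n::finite"
  assumes "norm y = 1" "cmod (y $ w) = 1" "j \<noteq> w"
  shows "y $ j = 0"
proof -
  have "cmod (y $ w) ^ 2 + (\<Sum>i\<in>UNIV - {w}. cmod (y $ i) ^ 2) = 1"
    using assms(1) by (simp add: norm_vec_def L2_set_def sum.remove[of UNIV w])
  then have "(\<Sum>i\<in>UNIV - {w}. cmod (y $ i) ^ 2) = 0" using assms(2) by simp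
  then have "\<forall>i\<in>UNIV - {w}. cmod (y $ i) ^ 2 = 0"
    by (subst sum_nonneg_eq_0_iff[symmetric]) auto
  then show ?thesis using assms(3) by auto
qed

lemma walk_entry_eq_0_if_pst:
  assumes "hermitian_mat A" "cmod (walk A t $ w $ u) = 1" "j \<noteq> w"
  shows "walk A t $ j $ u = 0"
proof -
  have "norm (walk A t *v axis u 1) = 1" using norm_walk_apply[OF assms(1)] by simp
  moreover have "cmod ((walk A t *v axis u 1) $ w) = 1"
    using assms(2) by (simp only: matrix_vector_mult_axis_nth)
  ultimately have "(walk A t *v axis u 1) $ j = 0" by (rule unit_vector_nth_eq_0[OF _ _ assms(3)])
  then show ?thesis by (simp only: matrix_vector_mult_axis_nth)
qed

lemma walk_axis_if_pst:
  assumes "hermitian_mat A" "cmod (walk A t $ w $ u) = 1"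
  shows "walk A t *v axis u 1 = walk A t $ w $ u *s axis w 1"
proof (rule vec_eq_iff[THEN iffD2], intro allI)
  fix j
  show "(walk A t *v axis u 1) $ j = (walk A t $ w $ u *s axis w 1) $ j"
  proof (cases "j = w")
    case True
    then show ?thesis
      by (simp only: matrix_vector_mult_axis_nth vector_smult_component) (simp add: axis_def)
  next
    case False
    then show ?thesis
      using walk_entry_eq_0_if_pst[OF assms False]
      by (simp only: matrix_vector_mult_axis_nth vector_smult_component) (simp add: axis_def)
  qed
qed

lemma matrix_vector_mult_scaleC: "(W::complex^'n::finite^'m) *v (c *s x) = c *s (W *v x)"
  by (simp add: vec_eq_iff matrix_vector_mult_def sum_distrib_left algebra_simps)

text \<open>A return of \<open>u\<close> to itself at time \<open>s\<close> can be undone: \<open>U(-s) e\<^sub>u\<close> is a phase times \<open>e\<^sub>u\<close>.\<close>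
lemma pst_diff_after_return:
  assumes "hermitian_mat A" "cmod (walk A s $ u $ u) = 1" "cmod (walk A t $ v $ u) = 1"
  shows "cmod (walk A (t - s) $ v $ u) = 1"
proof -
  define e where "e = (axis u 1 :: complex^_)"
  define d where "d = walk A s $ u $ u"
  have "d \<noteq> 0" using assms(2) d_def by auto
  have "e = walk A (-s + s) *v e" by (simp add: walk_zero)
  also have "\<dots> = d *s (walk A (-s) *v e)"
    using walk_axis_if_pst[OF assms(1,2)] by (simp only: walk_add e_def d_def matrix_vector_mult_scaleC)
  finally have "walk A (-s) *v e = (1 / d) *s e"
    using \<open>d \<noteq> 0\<close> by (simp add: vec_eq_iff field_simps)
  then have "walk A (t - s) *v e = (1 / d) *s (walk A t *v e)"
    by (metis diff_conv_add_uminus matrix_vector_mult_scaleC walk_add)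
  then have "walk A (t - s) $ v $ u = (1 / d) * walk A t $ v $ u"
    by (metis e_def matrix_vector_mult_axis_nth vector_smult_component)
  then show ?thesis using assms(2,3) d_def by (simp add: norm_divide)
qed

lemma closed_pst_levelset: "closed {t. cmod (walk A t $ w $ v) = 1}"
  by (intro closed_Collect_eq continuous_on_norm continuous_on_walk_entry continuous_on_const)

lemma bdd_below_pst_times: "bdd_below (pst_times A v w)"
  by (rule bdd_belowI[where m=0]) (auto simp: pst_times_def)

lemma pst_at_min_pst_time:
  assumes "pst_times A v w \<noteq> {}"
  shows "cmod (walk A (min_pst_time A v w) $ w $ v) = 1"
proof -
  have "min_pst_time A v w \<in> closure (pst_times A v w)"
    unfolding min_pst_time_def by (rule closure_contains_Inf[OF assms bdd_below_pst_times])
  also have "\<dots> \<subseteq> {t. cmod (walk A t $ w $ v) = 1}"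
    by (rule closure_minimal) (auto simp: pst_times_def closed_pst_levelset)
  finally show ?thesis by simp
qed

theorem lemma1:
  fixes A :: "complex^'n::finite^'n" and u v :: 'n
  assumes "hermitian_mat A"
    and "universal_pst A"
    and "v \<noteq> u"
  shows "min_pst_time A u v < min_pst_time A u u"
proof (rule ccontr)
  let ?m = "min_pst_time A u v"
  have ne: "pst_times A u v \<noteq> {}" "pst_times A u u \<noteq> {}"
    using assms(2) by (auto simp: universal_pst_def)
  have pst_m: "cmod (walk A ?m $ v $ u) = 1" by (rule pst_at_min_pst_time[OF ne(1)])
  have "walk A ?m $ u $ u = 0" by (rule walk_entry_eq_0_if_pst[OF assms(1) pst_m assms(3)[symmetric]])
  assume "\<not> ?m < min_pst_time A u u"
  then consider "min_pst_time A u u = ?m" | "min_pst_time A u u < ?m" by linarith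
  then show False
  proof cases
    case 1
    then show False using pst_at_min_pst_time[OF ne(2)] \<open>walk A ?m $ u $ u = 0\<close> by simp
  next
    case 2
    then obtain s where s: "s \<in> pst_times A u u" "s < ?m"
      using cInf_lessD[OF ne(2)] by (auto simp: min_pst_time_def)
    then have "?m - s \<in> pst_times A u v"
      using pst_diff_after_return[OF assms(1) _ pst_m] by (auto simp: pst_times_def)
    then have "?m \<le> ?m - s"
      unfolding min_pst_time_def by (rule cInf_lower[OF _ bdd_below_pst_times])
    then show False using s(1) by (simp add: pst_times_def)
  qed
qed

end
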